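(* Let $n,\nu\in\mathbb{N}$ with $1\le\nu\le n$, and let $0=n_0<n_1<\cdots<n_\nu=n$ be integers. Let $m\ge 1$ and, for each $i\in\{1,\dots,m\}$, let $(r_i,a_i,d_i)$ be integers with $0\le a_i<d_i\le\nu$ and $0<r_i\le n_{d_i}-n_{a_i}$. Let $\bm h=(h_1,\dots,h_n)\in\mathbb{N}^n$ satisfy the block monotonicity condition: for every $\kappa\in\{1,\dots,\nu\}$, $h_i\ge h_j$ whenever $n_{\kappa-1}+1\le i<j\le n_\kappa$. Then $\bm h$ is adequate for the demand $(\bm r,\bm a,\bm d)$ if and only if $W_{k_1k_2\cdots k_\nu}(\bm h,\bm r,\bm a,\bm d)\ge 0$ for every integer tuple $(k_1,\dots,k_\nu)$ with $0\le k_\kappa\le n_\kappa-n_{\kappa-1}$ for all $\kappa$.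
   Context: The time horizon consists of $n$ slots; the integers $0=n_0<n_1<\dots<n_\nu=n$ are the admissible arrival times/deadlines. A load with service $(r,a,d)$ requires one unit of power in exactly $r$ of the slots $n_a+1,\dots,n_d$. The supply $\bm h$ is called adequate for the demand $(\bm r,\bm a,\bm d)=((r_i,a_i,d_i))_{i=1}^m$ if there exists an $m\times n$ matrix $A$ with entries in $\{0,1\}$ such that for all $i$: $\sum_{j=1}^n A(i,j)=r_i$ and $A(i,j)=0$ whenever $j\notin\{n_{a_i}+1,\dots,n_{d_i}\}$; and for all $j$: $\sum_{i=1}^m A(i,j)\le h_j$. For $[t]^+=\max\{t,0\}$, the structure tensor is defined, for integers $0\le k_\kappa\le n_\kappa-n_{\kappa-1}$ ($\kappa=1,\dots,\nu$), by $$W_{k_1\cdots k_\nu}(\bm h,\bm r,\bm a,\bm d)=\sum_{\kappa=1}^{\nu}\sum_{j=n_{\kappa-1}+k_\kappa+1}^{n_\kappa}h_j-\sum_{i=1}^m\Big[r_i-\sum_{\kappa=a_i+1}^{d_i}k_\kappa\Big]^+.$$ *)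

theory Defs
  imports Main
begin

text \<open>Conventions: breakpoints nb 0, ..., nb nu (nb 0 = 0, nb nu = n);
  supply h j for slots j = 1..n; loads i = 1..m with service (r i, a i, d i).\<close>

definition adequate ::
  "nat \<Rightarrow> nat \<Rightarrow> (nat \<Rightarrow> nat) \<Rightarrow> (nat \<Rightarrow> nat) \<Rightarrow> (nat \<Rightarrow> nat) \<Rightarrow> (nat \<Rightarrow> nat) \<Rightarrow> (nat \<Rightarrow> nat) \<Rightarrow> bool"
  where "adequate n m nb h r a d \<longleftrightarrow>
    (\<exists>A :: nat \<Rightarrow> nat \<Rightarrow> nat.
       (\<forall>i\<in>{1..m}. \<forall>j\<in>{1..n}. A i j \<in> {0, 1}) \<and>
       (\<forall>i\<in>{1..m}. (\<Sum>j=1..n. A i j) = r i) \<and>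
       (\<forall>i\<in>{1..m}. \<forall>j\<in>{1..n}. j \<notin> {nb (a i) + 1 .. nb (d i)} \<longrightarrow> A i j = 0) \<and>
       (\<forall>j\<in>{1..n}. (\<Sum>i=1..m. A i j) \<le> h j))"

definition structure_tensor ::
  "nat \<Rightarrow> nat \<Rightarrow> (nat \<Rightarrow> nat) \<Rightarrow> (nat \<Rightarrow> nat) \<Rightarrow> (nat \<Rightarrow> nat) \<Rightarrow> (nat \<Rightarrow> nat) \<Rightarrow> (nat \<Rightarrow> nat) \<Rightarrow> (nat \<Rightarrow> nat) \<Rightarrow> int"
  where "structure_tensor nu m nb k h r a d =
    (\<Sum>\<kappa>=1..nu. \<Sum>j=nb (\<kappa> - 1) + k \<kappa> + 1 .. nb \<kappa>. int (h j))
    - (\<Sum>i=1..m. max 0 (int (r i) - (\<Sum>\<kappa>=a i + 1 .. d i. int (k \<kappa>))))"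

end

theory Submission
  imports Defs
begin

text \<open>Adequacy asks for a subgraph of the bipartite graph that joins each load to the slots
  of its service window, in which load \<open>i\<close> has degree \<open>r\<^sub>i\<close> and slot \<open>j\<close> degree at most
  \<open>h\<^sub>j\<close>. By the augmenting-path argument behind Hall's theorem such a subgraph exists iff
  every set \<open>T\<close> of slots satisfies \<open>\<Sum>\<^sub>i [r\<^sub>i - |window\<^sub>i - T|]\<^sup>+ \<le> h(T)\<close>: when a load
  cannot be given one more unit, the loads reachable from it by alternating paths, together
  with their unused slots, violate this inequality. The windows are unions of blocks, so the
  left-hand side depends on \<open>T\<close> only through the numbers \<open>k\<^sub>\<kappa>\<close> of slots of block \<open>\<kappa>\<close> missing
  from \<open>T\<close>; for given \<open>k\<^sub>\<kappa>\<close>, block monotonicity makes \<open>h(T)\<close> smallest when \<open>T\<close> consists of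
  the last slots of each block, and for that \<open>T\<close> the inequality reads \<open>W\<^sub>k\<^sub>1\<^sub>\<dots>\<^sub>k\<^sub>\<nu> \<ge> 0\<close>.\<close>

section \<open>Degree-constrained subgraphs of a bipartite graph\<close>

definition out_degree :: "('a \<times> 'b) set \<Rightarrow> 'a \<Rightarrow> nat" where
  "out_degree M x = card (M `` {x})"

lemma out_degree_insert:
  assumes "finite M" and "(x, y) \<notin> M"
  shows "out_degree (insert (x, y) M) z = (if z = x then Suc (out_degree M z) else out_degree M z)"
proof -
  have "insert (x, y) M `` {z} = (if z = x then insert y (M `` {z}) else M `` {z})" by auto
  then show ?thesis using assms finite_Image[OF assms(1)] by (simp add: out_degree_def)
qed

lemma out_degree_remove:
  assumes "finite M" and "(x, y) \<in> M"
  shows "out_degree (M - {(x, y)}) z = (if z = x then out_degree M z - 1 else out_degree M z)"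
proof -
  have "(M - {(x, y)}) `` {z} = (if z = x then M `` {z} - {y} else M `` {z})" by auto
  then show ?thesis using assms finite_Image[OF assms(1)] by (simp add: out_degree_def)
qed

lemma out_degree_pos: "finite M \<Longrightarrow> (x, y) \<in> M \<Longrightarrow> 0 < out_degree M x"
  unfolding out_degree_def by (metis Image_singleton_iff card_gt_0_iff empty_iff finite_Image)

lemma sum_card_Image_Int_swap:
  assumes "finite A" and "finite B"
  shows "(\<Sum>a\<in>A. card (M `` {a} \<inter> B)) = (\<Sum>b\<in>B. card (M\<inverse> `` {b} \<inter> A))"
proof -
  have "card (M `` {a} \<inter> B) = (\<Sum>b\<in>B. if (a, b) \<in> M then 1 else 0)" for a
    using assms(2) by (simp add: sum.If_cases Int_def conj_commute)
  moreover have "card (M\<inverse> `` {b} \<inter> A) = (\<Sum>a\<in>A. if (a, b) \<in> M then 1 else 0)" for b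
    using assms(1) by (simp add: sum.If_cases Int_def conj_commute)
  ultimately show ?thesis by (simp add: sum.swap[of _ A B])
qed

lemma sum_update_Suc:
  fixes f :: "'a \<Rightarrow> nat"
  assumes "finite A" and "x \<in> A"
  shows "sum (f(x := Suc (f x))) A = Suc (sum f A)"
proof -
  have "sum (f(x := Suc (f x))) (A - {x}) = sum f (A - {x})" by (rule sum.cong) auto
  then show ?thesis using assms by (simp add: sum.remove)
qed

locale bipartite_capacities =
  fixes I :: "'a set" and J :: "'b set" and E :: "('a \<times> 'b) set" and h :: "'b \<Rightarrow> nat"
  assumes finite_I: "finite I" and finite_J: "finite J" and edges_subset: "E \<subseteq> I \<times> J"
begin

definition feasible :: "('a \<Rightarrow> nat) \<Rightarrow> ('a \<times> 'b) set \<Rightarrow> bool" where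
  "feasible r M \<longleftrightarrow>
     M \<subseteq> E \<and> (\<forall>i\<in>I. out_degree M i = r i) \<and> (\<forall>j\<in>J. out_degree (M\<inverse>) j \<le> h j)"

text \<open>Truncated subtraction on \<open>nat\<close> is the positive part \<open>[\<cdot>]\<^sup>+\<close>.\<close>

definition deficiency :: "('a \<Rightarrow> nat) \<Rightarrow> 'b set \<Rightarrow> nat" where
  "deficiency r T = (\<Sum>i\<in>I. r i - card (E `` {i} - T))"

definition deficiency_condition :: "('a \<Rightarrow> nat) \<Rightarrow> bool" where
  "deficiency_condition r \<longleftrightarrow> (\<forall>T\<subseteq>J. deficiency r T \<le> sum h T)"

lemma finite_edges: "finite E"
  using finite_subset[OF edges_subset] finite_I finite_J by blast

lemma feasible_finite: "feasible r M \<Longrightarrow> finite M"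
  unfolding feasible_def using finite_edges finite_subset by blast

lemma deficiency_le_supply:
  assumes M: "feasible r M" and T: "T \<subseteq> J"
  shows "deficiency r T \<le> sum h T"
proof -
  have fin_M: "finite M" using feasible_finite[OF M] .
  have fin_T: "finite T" using finite_subset[OF T finite_J] .
  have "r i - card (E `` {i} - T) \<le> card (M `` {i} \<inter> T)" if "i \<in> I" for i
  proof -
    have "r i = card (M `` {i} \<inter> T) + card (M `` {i} - T)"
      using M that card_Int_Diff[OF finite_Image[OF fin_M]]
      by (simp add: feasible_def out_degree_def)
    moreover have "card (M `` {i} - T) \<le> card (E `` {i} - T)"
      using M by (intro card_mono) (auto simp: feasible_def intro: finite_Image finite_edges)
    ultimately show ?thesis by linarith
  qed
  then have "deficiency r T \<le> (\<Sum>i\<in>I. card (M `` {i} \<inter> T))"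
    unfolding deficiency_def by (rule sum_mono)
  also have "\<dots> = (\<Sum>j\<in>T. card (M\<inverse> `` {j} \<inter> I))"
    by (rule sum_card_Image_Int_swap[OF finite_I fin_T])
  also have "\<dots> \<le> (\<Sum>j\<in>T. out_degree (M\<inverse>) j)"
    using fin_M by (intro sum_mono) (simp add: out_degree_def card_mono finite_Image)
  also have "\<dots> \<le> sum h T"
    using M T by (intro sum_mono) (auto simp: feasible_def)
  finally show ?thesis .
qed

text \<open>\<open>augmenting M q x\<close>: an \<open>M\<close>-alternating path from row \<open>x\<close> that uses at most \<open>q\<close>
  edges of \<open>M\<close> ends in a column with spare capacity.\<close>

fun augmenting :: "('a \<times> 'b) set \<Rightarrow> nat \<Rightarrow> 'a \<Rightarrow> bool" where
  "augmenting M 0 x \<longleftrightarrow> (\<exists>j. (x, j) \<in> E - M \<and> out_degree (M\<inverse>) j < h j)"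
| "augmenting M (Suc q) x \<longleftrightarrow>
     augmenting M q x \<or> (\<exists>j y. (x, j) \<in> E - M \<and> (y, j) \<in> M \<and> augmenting M q y)"

lemma augmenting_mono:
  assumes "augmenting M q x" and "q \<le> q'"
  shows "augmenting M q' x"
  using assms(2,1) by (induction q' rule: dec_induct) auto

lemma feasible_insert:
  assumes M: "feasible r M" and lj: "(l, j) \<in> E - M" and free: "out_degree (M\<inverse>) j < h j"
  shows "feasible (r(l := Suc (r l))) (insert (l, j) M)"
proof -
  have fin: "finite M" "finite (M\<inverse>)" using feasible_finite[OF M] by auto
  have "(insert (l, j) M)\<inverse> = insert (j, l) (M\<inverse>)" by auto
  then show ?thesis
    using M lj free out_degree_insert[OF fin(1), of l j] out_degree_insert[OF fin(2), of j l]
    by (auto simp: feasible_def)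
qed

context
  fixes M :: "('a \<times> 'b) set" and l y :: 'a and j :: 'b
  assumes fin: "finite M" and lj: "(l, j) \<notin> M" and yj: "(y, j) \<in> M" and ly: "l \<noteq> y"
begin

lemma out_degree_swap:
  "out_degree (insert (l, j) (M - {(y, j)})) x =
     (if x = l then Suc (out_degree M x) else if x = y then out_degree M x - 1 else out_degree M x)"
  using fin lj yj ly by (simp add: out_degree_insert out_degree_remove)

lemma out_degree_converse_swap:
  "out_degree ((insert (l, j) (M - {(y, j)}))\<inverse>) j' = out_degree (M\<inverse>) j'"
proof -
  have "(insert (l, j) (M - {(y, j)}))\<inverse> = insert (j, l) (M\<inverse> - {(j, y)})" by auto
  moreover have "0 < out_degree (M\<inverse>) j" using fin yj by (intro out_degree_pos) auto
  ultimately show ?thesis using fin lj yj by (simp add: out_degree_insert out_degree_remove)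
qed

text \<open>Trading \<open>(y, j)\<close> for \<open>(l, j)\<close> only destroys alternating paths through the edge
  \<open>(y, j)\<close>; such a path already gives a shorter augmenting path from \<open>y\<close>.\<close>

lemma augmenting_swap:
  assumes no_path: "\<not> augmenting M q l"
  shows "augmenting M q' x \<Longrightarrow> q' \<le> q \<Longrightarrow>
    augmenting (insert (l, j) (M - {(y, j)})) q' x \<or> (\<exists>q''<q'. augmenting M q'' y)"
proof (induction q' arbitrary: x)
  case 0
  then obtain j' where j': "(x, j') \<in> E - M" "out_degree (M\<inverse>) j' < h j'" by auto
  have "x \<noteq> l" using 0 no_path augmenting_mono by blast
  then show ?case using j' by (auto simp: out_degree_converse_swap)
next
  case (Suc q')
  have "x \<noteq> l" using Suc.prems no_path augmenting_mono by blast
  from Suc.prems(1) consider "augmenting M q' x"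
    | j' z where "(x, j') \<in> E - M" "(z, j') \<in> M" "augmenting M q' z"
    by auto
  then show ?case
  proof cases
    case 1
    with Suc.IH Suc.prems(2) have "augmenting (insert (l, j) (M - {(y, j)})) q' x
        \<or> (\<exists>q''<q'. augmenting M q'' y)" by simp
    then show ?thesis by (auto intro: less_SucI)
  next
    case 2
    show ?thesis
    proof (cases "z = y")
      case True
      with 2 show ?thesis by auto
    next
      case False
      from 2 Suc.IH[of z] Suc.prems(2) have "augmenting (insert (l, j) (M - {(y, j)})) q' z
          \<or> (\<exists>q''<q'. augmenting M q'' y)" by simp
      with 2 False \<open>x \<noteq> l\<close> show ?thesis by (auto intro: less_SucI)
    qed
  qed
qed

end

lemma augmenting_imp_feasible_increment:
  "feasible r M \<Longrightarrow> augmenting M q l \<Longrightarrow> \<exists>M'. feasible (r(l := Suc (r l))) M'"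
proof (induction q arbitrary: r M l)
  case 0
  then obtain j where "(l, j) \<in> E - M" "out_degree (M\<inverse>) j < h j" by auto
  with 0 show ?case by (blast intro: feasible_insert)
next
  case (Suc q)
  show ?case
  proof (cases "augmenting M q l")
    case True
    then show ?thesis using Suc by blast
  next
    case no_path: False
    then obtain j y where lj: "(l, j) \<in> E - M" and yj: "(y, j) \<in> M" and path_y: "augmenting M q y"
      using Suc.prems by auto
    have ly: "l \<noteq> y" using no_path lj yj path_y by auto
    have fin: "finite M" using feasible_finite[OF Suc.prems(1)] .
    \<comment> \<open>A shortest augmenting path from \<open>y\<close> survives the swap.\<close>
    define q0 where "q0 = (LEAST q'. augmenting M q' y)"
    have "augmenting M q0 y" and "q0 \<le> q"
      unfolding q0_def using path_y by (auto intro: LeastI Least_le)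
    moreover have "\<not> augmenting M q'' y" if "q'' < q0" for q''
      using that not_less_Least unfolding q0_def by blast
    ultimately have path': "augmenting (insert (l, j) (M - {(y, j)})) q y"
      using augmenting_swap[OF fin _ yj ly no_path, of q0 y] lj augmenting_mono by blast
    define r' where "r' = r(l := Suc (r l), y := r y - 1)"
    have "feasible r' (insert (l, j) (M - {(y, j)}))"
      using Suc.prems(1) lj yj ly fin
      by (auto simp: r'_def feasible_def out_degree_swap out_degree_converse_swap)
    from Suc.IH[OF this path'] obtain M' where "feasible (r'(y := Suc (r' y))) M'" by blast
    moreover have "0 < r y"
      using Suc.prems(1) yj fin out_degree_pos edges_subset by (force simp: feasible_def)
    then have "r'(y := Suc (r' y)) = r(l := Suc (r l))"
      using ly by (auto simp: r'_def fun_eq_iff)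
    ultimately show ?thesis by metis
  qed
qed

inductive_set alternating_reach :: "('a \<times> 'b) set \<Rightarrow> 'a \<Rightarrow> 'a set" for M i0 where
  start: "i0 \<in> alternating_reach M i0"
| step: "x \<in> alternating_reach M i0 \<Longrightarrow> (x, j) \<in> E - M \<Longrightarrow> (y, j) \<in> M \<Longrightarrow>
    y \<in> alternating_reach M i0"

lemma augmenting_from_reach:
  "x \<in> alternating_reach M i0 \<Longrightarrow> augmenting M q x \<Longrightarrow> \<exists>q'. augmenting M q' i0"
proof (induction arbitrary: q rule: alternating_reach.induct)
  case start
  then show ?case by blast
next
  case (step x j y)
  then have "augmenting M (Suc q) x" by auto
  with step.IH show ?case by blast
qed

lemma alternating_reach_subset:
  assumes "feasible r M" and "i0 \<in> I"
  shows "alternating_reach M i0 \<subseteq> I"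
proof
  fix x assume "x \<in> alternating_reach M i0"
  then show "x \<in> I" by cases (use assms edges_subset in \<open>auto simp: feasible_def\<close>)
qed

lemma supply_eq_unmet_demand:
  assumes M: "feasible r M" and R: "R \<subseteq> I" and T: "T \<subseteq> J"
    and saturated: "\<And>j. j \<in> T \<Longrightarrow> h j \<le> out_degree (M\<inverse>) j"
    and closed: "\<And>j. j \<in> T \<Longrightarrow> M\<inverse> `` {j} \<subseteq> R"
    and full: "\<And>y. y \<in> R \<Longrightarrow> E `` {y} - T \<subseteq> M `` {y}"
  shows "sum h T = (\<Sum>y\<in>R. r y - card (E `` {y} - T))"
proof -
  have fin_M: "finite M" using feasible_finite[OF M] .
  have fin_R: "finite R" using finite_subset[OF R finite_I] .
  have fin_T: "finite T" using finite_subset[OF T finite_J] .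
  have "h j = card (M\<inverse> `` {j} \<inter> R)" if "j \<in> T" for j
    using M T saturated[OF that] closed[OF that] that
    by (auto simp: feasible_def out_degree_def Int_absorb2 intro: antisym)
  then have "sum h T = (\<Sum>j\<in>T. card (M\<inverse> `` {j} \<inter> R))" by (rule sum.cong[OF refl])
  also have "\<dots> = (\<Sum>y\<in>R. card (M `` {y} \<inter> T))"
    using sum_card_Image_Int_swap[OF fin_R fin_T, of M] by simp
  also have "\<dots> = (\<Sum>y\<in>R. r y - card (E `` {y} - T))"
  proof (rule sum.cong[OF refl])
    fix y assume y: "y \<in> R"
    have "M `` {y} - T = E `` {y} - T" using M full[OF y] by (auto simp: feasible_def)
    moreover have "r y = card (M `` {y} \<inter> T) + card (M `` {y} - T)"
      using M R y card_Int_Diff[OF finite_Image[OF fin_M]] by (auto simp: feasible_def out_degree_def)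
    ultimately show "card (M `` {y} \<inter> T) = r y - card (E `` {y} - T)" by simp
  qed
  finally show ?thesis .
qed

lemma tight_set_without_augmenting_path:
  assumes M: "feasible r M" and i0: "i0 \<in> I" and no_path: "\<And>q. \<not> augmenting M q i0"
  obtains R T where "i0 \<in> R" "R \<subseteq> I" "T \<subseteq> J" "card (E `` {i0} - T) \<le> r i0"
    "sum h T = (\<Sum>y\<in>R. r y - card (E `` {y} - T))"
proof
  let ?R = "alternating_reach M i0" and ?T = "(E - M) `` alternating_reach M i0"
  have R: "?R \<subseteq> I" using alternating_reach_subset[OF M i0] .
  have full: "E `` {y} - ?T \<subseteq> M `` {y}" if "y \<in> ?R" for y using that by blast
  show "i0 \<in> ?R" by (rule alternating_reach.start)
  show "?R \<subseteq> I" by (rule R)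
  show T: "?T \<subseteq> J" using edges_subset by blast
  have "card (E `` {i0} - ?T) \<le> card (M `` {i0})"
    using full[OF alternating_reach.start] feasible_finite[OF M] by (simp add: card_mono finite_Image)
  then show "card (E `` {i0} - ?T) \<le> r i0"
    using M i0 by (simp add: feasible_def out_degree_def)
  show "sum h ?T = (\<Sum>y\<in>?R. r y - card (E `` {y} - ?T))"
  proof (rule supply_eq_unmet_demand[OF M R T _ _ full])
    fix j assume "j \<in> ?T"
    then obtain x where "x \<in> ?R" "(x, j) \<in> E - M" by blast
    moreover have "\<not> augmenting M 0 x"
      using augmenting_from_reach[OF \<open>x \<in> ?R\<close>] no_path by blast
    ultimately show "h j \<le> out_degree (M\<inverse>) j" by auto
    show "M\<inverse> `` {j} \<subseteq> ?R"
      using \<open>x \<in> ?R\<close> \<open>(x, j) \<in> E - M\<close> by (auto intro: alternating_reach.step)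
  qed
qed

lemma feasible_increment:
  assumes cond: "deficiency_condition (r(i0 := Suc (r i0)))"
    and M: "feasible r M" and i0: "i0 \<in> I"
  shows "\<exists>M'. feasible (r(i0 := Suc (r i0))) M'"
proof (cases "\<exists>q. augmenting M q i0")
  case True
  then show ?thesis using augmenting_imp_feasible_increment[OF M] by blast
next
  case False
  then have "\<not> augmenting M q i0" for q by blast
  then obtain R T where R: "i0 \<in> R" "R \<subseteq> I" and T: "T \<subseteq> J"
    and i0_demand: "card (E `` {i0} - T) \<le> r i0"
    and tight: "sum h T = (\<Sum>y\<in>R. r y - card (E `` {y} - T))"
    by (rule tight_set_without_augmenting_path[OF M i0])
  let ?r = "r(i0 := Suc (r i0))"
  define unmet where "unmet r' y = r' y - card (E `` {y} - T)" for r' y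
  have "unmet ?r = (unmet r)(i0 := Suc (unmet r i0))"
    using i0_demand by (intro ext) (simp add: unmet_def Suc_diff_le)
  then have "(\<Sum>y\<in>R. unmet ?r y) = Suc (\<Sum>y\<in>R. unmet r y)"
    using sum_update_Suc[OF finite_subset[OF R(2) finite_I] R(1)] by presburger
  then have "Suc (sum h T) = (\<Sum>y\<in>R. unmet ?r y)" using tight by (simp add: unmet_def)
  also have "\<dots> \<le> deficiency ?r T"
    unfolding deficiency_def unmet_def by (rule sum_mono2[OF finite_I R(2)]) simp
  also have "\<dots> \<le> sum h T" using cond T by (simp add: deficiency_condition_def)
  finally show ?thesis by simp
qed

lemma deficiency_condition_mono:
  assumes "deficiency_condition r" and "\<And>i. r' i \<le> r i"
  shows "deficiency_condition r'"
proof -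
  have "deficiency r' T \<le> deficiency r T" for T
    unfolding deficiency_def using assms(2) by (intro sum_mono diff_le_mono)
  then show ?thesis using assms(1) unfolding deficiency_condition_def by (meson order_trans)
qed

lemma deficiency_condition_imp_feasible: "deficiency_condition r \<Longrightarrow> \<exists>M. feasible r M"
proof (induction "sum r I" arbitrary: r)
  case 0
  then have "\<forall>i\<in>I. r i = 0" using finite_I by simp
  then show ?case by (intro exI[of _ "{}"]) (simp add: feasible_def out_degree_def)
next
  case (Suc s)
  then obtain i0 where i0: "i0 \<in> I" "0 < r i0"
    by (metis gr0I nat.distinct(1) sum.neutral)
  define r' where "r' = r(i0 := r i0 - 1)"
  have r: "r = r'(i0 := Suc (r' i0))" using i0 by (auto simp: r'_def fun_eq_iff)
  then have "s = sum r' I" using Suc.hyps(2) sum_update_Suc[OF finite_I i0(1), of r'] by simp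
  moreover have "deficiency_condition r'"
    using Suc.prems by (rule deficiency_condition_mono) (simp add: r'_def)
  ultimately obtain M where "feasible r' M" using Suc.hyps(1) by blast
  then show ?case using feasible_increment[OF Suc.prems[unfolded r] _ i0(1)] r by simp
qed

theorem feasible_iff_deficiency_condition: "(\<exists>M. feasible r M) \<longleftrightarrow> deficiency_condition r"
  using deficiency_le_supply deficiency_condition_imp_feasible
  by (auto simp: deficiency_condition_def)

end

section \<open>Slots grouped into blocks\<close>

lemma sum_last_le_sum_antitone:
  fixes f :: "nat \<Rightarrow> 'a::ordered_comm_monoid_add"
  assumes antitone: "\<And>i j. lo + 1 \<le> i \<Longrightarrow> i < j \<Longrightarrow> j \<le> hi \<Longrightarrow> f j \<le> f i"
    and S: "S \<subseteq> {lo + 1..hi}"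
  shows "sum f {hi - card S + 1..hi} \<le> sum f S"
  using assms
proof (induction hi arbitrary: S)
  case 0
  then show ?case by auto
next
  case (Suc hi)
  have antitone': "f j \<le> f i" if "lo + 1 \<le> i" "i < j" "j \<le> hi" for i j
    using Suc.prems(1) that by simp
  have fin: "finite S" using finite_subset[OF Suc.prems(2)] by simp
  show ?case
  proof (cases "Suc hi \<in> S")
    case True
    let ?S = "S - {Suc hi}"
    have S': "?S \<subseteq> {lo + 1..hi}" using Suc.prems(2) by auto
    have "card ?S \<le> hi" using card_mono[OF _ S'] by simp
    then have "{Suc hi - card S + 1..Suc hi} = insert (Suc hi) {hi - card ?S + 1..hi}"
      using card_Suc_Diff1[OF fin True] by auto
    then have "sum f {Suc hi - card S + 1..Suc hi} = f (Suc hi) + sum f {hi - card ?S + 1..hi}"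
      by simp
    also have "\<dots> \<le> f (Suc hi) + sum f ?S"
      using Suc.IH[OF antitone' S'] by (rule add_left_mono)
    also have "\<dots> = sum f S" by (rule sum.remove[OF fin True, symmetric])
    finally show ?thesis .
  next
    case False
    then have S': "S \<subseteq> {lo + 1..hi}" using Suc.prems(2) le_Suc_eq by fastforce
    have card_S: "card S \<le> hi - lo" using card_mono[OF _ S'] by simp
    show ?thesis
    proof (cases "card S = 0")
      case True
      then show ?thesis using fin by simp
    next
      case False
      then have "sum f {Suc hi - card S + 1..Suc hi} = (\<Sum>i=hi - card S + 1..hi. f (Suc i))"
        using card_S sum.shift_bounds_cl_Suc_ivl[of f "hi - card S + 1" hi]
        by (simp add: Suc_diff_le)
      also have "\<dots> \<le> sum f {hi - card S + 1..hi}"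
        using card_S False by (intro sum_mono Suc.prems(1)) auto
      also have "\<dots> \<le> sum f S" using Suc.IH[OF antitone' S'] .
      finally show ?thesis .
    qed
  qed
qed

lemma sum_zero_one_eq_card:
  fixes f :: "'a \<Rightarrow> nat"
  assumes "finite X" and "\<And>x. x \<in> X \<Longrightarrow> f x \<in> {0, 1}"
  shows "sum f X = card {x \<in> X. f x = 1}"
proof -
  have "sum f X = (\<Sum>x\<in>X. if f x = 1 then 1 else 0)"
    using assms(2) by (intro sum.cong) auto
  then show ?thesis using assms(1) by (simp add: sum.If_cases Int_def)
qed

locale slotted_windows =
  fixes n nu m :: nat and nb a d h :: "nat \<Rightarrow> nat"
  assumes nb_0: "nb 0 = 0" and nb_nu: "nb nu = n"
    and nb_less: "\<And>\<kappa>. \<kappa> < nu \<Longrightarrow> nb \<kappa> < nb (\<kappa> + 1)"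
    and windows: "\<And>i. i \<in> {1..m} \<Longrightarrow> a i \<le> d i \<and> d i \<le> nu"
begin

definition window_edges :: "(nat \<times> nat) set" where
  "window_edges = {(i, j). i \<in> {1..m} \<and> j \<in> {nb (a i) + 1..nb (d i)}}"

definition block :: "nat \<Rightarrow> nat set" where
  "block \<kappa> = {nb (\<kappa> - 1) + 1..nb \<kappa>}"

definition tail :: "nat \<Rightarrow> nat \<Rightarrow> nat set" where
  "tail \<kappa> k = {nb (\<kappa> - 1) + k + 1..nb \<kappa>}"

lemma nb_mono: "\<kappa> \<le> \<kappa>' \<Longrightarrow> \<kappa>' \<le> nu \<Longrightarrow> nb \<kappa> \<le> nb \<kappa>'"
proof (induction \<kappa>' rule: dec_induct)
  case (step k)
  then show ?case using nb_less[of k] by simp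
qed simp

lemma window_edges_subset: "window_edges \<subseteq> {1..m} \<times> {1..n}"
  using windows nb_mono nb_nu by (fastforce simp: window_edges_def)

sublocale bipartite_capacities "{1..m}" "{1..n}" window_edges h
  using window_edges_subset by unfold_locales auto

lemma window_edges_Image: "i \<in> {1..m} \<Longrightarrow> window_edges `` {i} = {nb (a i) + 1..nb (d i)}"
  by (auto simp: window_edges_def)

lemma sum_interval_blocks:
  fixes f :: "nat \<Rightarrow> 'b::comm_monoid_add"
  assumes "a' \<le> d'" and "d' \<le> nu"
  shows "sum f ({nb a' + 1..nb d'} \<inter> T) = (\<Sum>\<kappa>=a' + 1..d'. sum f (block \<kappa> \<inter> T))"
  using assms
proof (induction d' rule: dec_induct)
  case (step k)
  have "nb a' \<le> nb k" "nb k \<le> nb (Suc k)" using step nb_mono by auto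
  then have "{nb a' + 1..nb (Suc k)} \<inter> T = ({nb a' + 1..nb k} \<inter> T) \<union> (block (Suc k) \<inter> T)"
    by (auto simp: block_def)
  then have "sum f ({nb a' + 1..nb (Suc k)} \<inter> T)
      = sum f ({nb a' + 1..nb k} \<inter> T) + sum f (block (Suc k) \<inter> T)"
    by (simp add: sum.union_disjoint[symmetric] block_def disjoint_iff)
  with step show ?case by simp
qed simp

lemma card_window_diff:
  assumes "i \<in> {1..m}"
  shows "card (window_edges `` {i} - T) = (\<Sum>\<kappa>=a i + 1..d i. card (block \<kappa> - T))"
  using sum_interval_blocks[of "a i" "d i" "\<lambda>_. 1 :: nat" "- T"] windows[OF assms]
  by (simp add: window_edges_Image[OF assms] Diff_eq block_def)

lemma sum_blocks:
  fixes f :: "nat \<Rightarrow> 'b::comm_monoid_add"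
  assumes "T \<subseteq> {1..n}"
  shows "sum f T = (\<Sum>\<kappa>=1..nu. sum f (block \<kappa> \<inter> T))"
  using sum_interval_blocks[of 0 nu f T] assms nb_0 nb_nu by (simp add: Int_absorb1)

lemma adequate_iff_feasible: "adequate n m nb h r a d \<longleftrightarrow> (\<exists>M. feasible r M)"
proof
  assume "adequate n m nb h r a d"
  then obtain A where A01: "\<forall>i\<in>{1..m}. \<forall>j\<in>{1..n}. A i j \<in> {0, 1}"
    and rows: "\<forall>i\<in>{1..m}. (\<Sum>j=1..n. A i j) = r i"
    and window: "\<forall>i\<in>{1..m}. \<forall>j\<in>{1..n}. j \<notin> {nb (a i) + 1..nb (d i)} \<longrightarrow> A i j = 0"
    and cols: "\<forall>j\<in>{1..n}. (\<Sum>i=1..m. A i j) \<le> h j"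
    unfolding adequate_def by blast
  let ?M = "{(i, j). i \<in> {1..m} \<and> j \<in> {1..n} \<and> A i j = 1}"
  have "?M \<subseteq> window_edges" using window by (fastforce simp: window_edges_def)
  moreover have "out_degree ?M i = r i" if "i \<in> {1..m}" for i
  proof -
    have "out_degree ?M i = card {j \<in> {1..n}. A i j = 1}"
      unfolding out_degree_def by (rule arg_cong[where f = card]) (use that in auto)
    also have "\<dots> = (\<Sum>j=1..n. A i j)"
      using A01 that by (intro sum_zero_one_eq_card[symmetric]) auto
    finally show ?thesis using rows that by simp
  qed
  moreover have "out_degree (?M\<inverse>) j \<le> h j" if "j \<in> {1..n}" for j
  proof -
    have "out_degree (?M\<inverse>) j = card {i \<in> {1..m}. A i j = 1}"
      unfolding out_degree_def by (rule arg_cong[where f = card]) (use that in auto)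
    also have "\<dots> = (\<Sum>i=1..m. A i j)"
      using A01 that by (intro sum_zero_one_eq_card[symmetric]) auto
    finally show ?thesis using cols that by simp
  qed
  ultimately show "\<exists>M. feasible r M" unfolding feasible_def by blast
next
  assume "\<exists>M. feasible r M"
  then obtain M where M: "feasible r M" ..
  then have M_sub: "M \<subseteq> {1..m} \<times> {1..n}"
    using window_edges_subset unfolding feasible_def by blast
  define A where "A i j = (if (i, j) \<in> M then 1 else 0 :: nat)" for i j
  have "(\<Sum>j=1..n. A i j) = r i" if "i \<in> {1..m}" for i
  proof -
    have "(\<Sum>j=1..n. A i j) = card {j \<in> {1..n}. A i j = 1}"
      by (rule sum_zero_one_eq_card) (auto simp: A_def)
    also have "{j \<in> {1..n}. A i j = 1} = M `` {i}" using M_sub by (auto simp: A_def)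
    finally show ?thesis using M that unfolding feasible_def out_degree_def by simp
  qed
  moreover have "(\<Sum>i=1..m. A i j) \<le> h j" if "j \<in> {1..n}" for j
  proof -
    have "(\<Sum>i=1..m. A i j) = card {i \<in> {1..m}. A i j = 1}"
      by (rule sum_zero_one_eq_card) (auto simp: A_def)
    also have "{i \<in> {1..m}. A i j = 1} = M\<inverse> `` {j}" using M_sub by (auto simp: A_def)
    finally show ?thesis using M that unfolding feasible_def out_degree_def by simp
  qed
  moreover have "A i j = 0" if "i \<in> {1..m}" "j \<notin> {nb (a i) + 1..nb (d i)}" for i j
    using M that unfolding feasible_def by (auto simp: A_def window_edges_def)
  ultimately show "adequate n m nb h r a d"
    unfolding adequate_def by (intro exI[of _ A]) (auto simp: A_def)
qed

definition block_deficiency :: "(nat \<Rightarrow> nat) \<Rightarrow> (nat \<Rightarrow> nat) \<Rightarrow> nat" where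
  "block_deficiency r k = (\<Sum>i=1..m. r i - (\<Sum>\<kappa>=a i + 1..d i. k \<kappa>))"

lemma structure_tensor_eq:
  "structure_tensor nu m nb k h r a d
     = int (\<Sum>\<kappa>=1..nu. sum h (tail \<kappa> (k \<kappa>))) - int (block_deficiency r k)"
proof -
  have "int (x - y) = max 0 (int x - int y)" for x y :: nat by simp
  then show ?thesis
    by (simp add: structure_tensor_def block_deficiency_def tail_def of_nat_sum)
qed

lemma deficiency_eq_block_deficiency:
  "deficiency r T = block_deficiency r (\<lambda>\<kappa>. card (block \<kappa> - T))"
  unfolding deficiency_def block_deficiency_def by (simp add: card_window_diff)

lemma block_deficiency_cong:
  assumes "\<And>\<kappa>. \<kappa> \<in> {1..nu} \<Longrightarrow> k \<kappa> = k' \<kappa>"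
  shows "block_deficiency r k = block_deficiency r k'"
  unfolding block_deficiency_def using assms windows
  by (intro sum.cong refl arg_cong2[where f = minus]) fastforce

lemma block_subset: "\<kappa> \<in> {1..nu} \<Longrightarrow> block \<kappa> \<subseteq> {1..n}"
  using nb_mono[of \<kappa> nu] nb_nu by (auto simp: block_def)

lemma tail_subset_block: "tail \<kappa> k \<subseteq> block \<kappa>"
  by (auto simp: tail_def block_def)

lemma blocks_disjoint:
  assumes "\<kappa> \<in> {1..nu}" and "\<kappa>' \<in> {1..nu}" and "\<kappa> \<noteq> \<kappa>'"
  shows "block \<kappa> \<inter> block \<kappa>' = {}"
proof -
  have "block \<kappa> \<inter> block \<kappa>' = {}" if "\<kappa> \<in> {1..nu}" "\<kappa>' \<in> {1..nu}" "\<kappa> < \<kappa>'" for \<kappa> \<kappa>'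
  proof -
    have "nb \<kappa> \<le> nb (\<kappa>' - 1)" using that nb_mono by simp
    then show ?thesis unfolding block_def disjoint_iff by auto
  qed
  then show ?thesis using assms by (metis Int_commute linorder_neq_iff)
qed

lemma card_block_diff_tails:
  assumes "\<kappa> \<in> {1..nu}" and "k \<kappa> \<le> nb \<kappa> - nb (\<kappa> - 1)"
  shows "card (block \<kappa> - (\<Union>\<kappa>'\<in>{1..nu}. tail \<kappa>' (k \<kappa>'))) = k \<kappa>"
proof -
  have "block \<kappa> - (\<Union>\<kappa>'\<in>{1..nu}. tail \<kappa>' (k \<kappa>')) = block \<kappa> - tail \<kappa> (k \<kappa>)"
    using assms(1) blocks_disjoint tail_subset_block by blast
  also have "\<dots> = {nb (\<kappa> - 1) + 1..nb (\<kappa> - 1) + k \<kappa>}"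
    using assms by (auto simp: block_def tail_def)
  finally show ?thesis by simp
qed

lemma sum_tails:
  fixes f :: "nat \<Rightarrow> 'b::comm_monoid_add"
  shows "sum f (\<Union>\<kappa>\<in>{1..nu}. tail \<kappa> (k \<kappa>)) = (\<Sum>\<kappa>=1..nu. sum f (tail \<kappa> (k \<kappa>)))"
proof -
  let ?T = "\<Union>\<kappa>\<in>{1..nu}. tail \<kappa> (k \<kappa>)"
  have "?T \<subseteq> {1..n}" using block_subset tail_subset_block by blast
  then have "sum f ?T = (\<Sum>\<kappa>=1..nu. sum f (block \<kappa> \<inter> ?T))" by (rule sum_blocks)
  also have "\<dots> = (\<Sum>\<kappa>=1..nu. sum f (tail \<kappa> (k \<kappa>)))"
  proof (rule sum.cong[OF refl])
    fix \<kappa> assume "\<kappa> \<in> {1..nu}"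
    then have "block \<kappa> \<inter> ?T = tail \<kappa> (k \<kappa>)" using blocks_disjoint tail_subset_block by blast
    then show "sum f (block \<kappa> \<inter> ?T) = sum f (tail \<kappa> (k \<kappa>))" by simp
  qed
  finally show ?thesis .
qed

lemma sum_tail_le_sum_block_Int:
  assumes "\<kappa> \<in> {1..nu}"
    and antitone: "\<And>i j. nb (\<kappa> - 1) + 1 \<le> i \<Longrightarrow> i < j \<Longrightarrow> j \<le> nb \<kappa> \<Longrightarrow> h j \<le> h i"
  shows "sum h (tail \<kappa> (card (block \<kappa> - T))) \<le> sum h (block \<kappa> \<inter> T)"
proof -
  have "nb (\<kappa> - 1) \<le> nb \<kappa>" using assms(1) nb_mono by simp
  moreover have "card (block \<kappa>) = card (block \<kappa> \<inter> T) + card (block \<kappa> - T)"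
    by (rule card_Int_Diff) (simp add: block_def)
  ultimately have "nb \<kappa> - card (block \<kappa> \<inter> T) + 1 = nb (\<kappa> - 1) + card (block \<kappa> - T) + 1"
    by (simp add: block_def)
  moreover have "sum h {nb \<kappa> - card (block \<kappa> \<inter> T) + 1..nb \<kappa>} \<le> sum h (block \<kappa> \<inter> T)"
    by (rule sum_last_le_sum_antitone[OF antitone]) (auto simp: block_def)
  ultimately show ?thesis by (simp add: tail_def)
qed

lemma deficiency_condition_iff_structure_tensor_nonneg:
  assumes antitone: "\<And>\<kappa> i j. \<kappa> \<in> {1..nu} \<Longrightarrow> nb (\<kappa> - 1) + 1 \<le> i \<Longrightarrow> i < j \<Longrightarrow> j \<le> nb \<kappa>
    \<Longrightarrow> h j \<le> h i"
  shows "deficiency_condition r \<longleftrightarrow>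
    (\<forall>k. (\<forall>\<kappa>\<in>{1..nu}. k \<kappa> \<le> nb \<kappa> - nb (\<kappa> - 1)) \<longrightarrow> 0 \<le> structure_tensor nu m nb k h r a d)"
proof (intro iffI allI impI)
  fix k :: "nat \<Rightarrow> nat"
  assume cond: "deficiency_condition r" and k: "\<forall>\<kappa>\<in>{1..nu}. k \<kappa> \<le> nb \<kappa> - nb (\<kappa> - 1)"
  let ?T = "\<Union>\<kappa>\<in>{1..nu}. tail \<kappa> (k \<kappa>)"
  have "block_deficiency r k = deficiency r ?T"
    unfolding deficiency_eq_block_deficiency
    by (rule block_deficiency_cong) (use k card_block_diff_tails in metis)
  also have "\<dots> \<le> sum h ?T"
  proof -
    have "?T \<subseteq> {1..n}" using block_subset tail_subset_block by blast
    then show ?thesis using cond unfolding deficiency_condition_def by blast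
  qed
  also have "\<dots> = (\<Sum>\<kappa>=1..nu. sum h (tail \<kappa> (k \<kappa>)))" by (rule sum_tails)
  finally show "0 \<le> structure_tensor nu m nb k h r a d"
    unfolding structure_tensor_eq by linarith
next
  assume W: "\<forall>k. (\<forall>\<kappa>\<in>{1..nu}. k \<kappa> \<le> nb \<kappa> - nb (\<kappa> - 1)) \<longrightarrow> 0 \<le> structure_tensor nu m nb k h r a d"
  show "deficiency_condition r" unfolding deficiency_condition_def
  proof (intro allI impI)
    fix T assume T: "T \<subseteq> {1..n}"
    let ?k = "\<lambda>\<kappa>. card (block \<kappa> - T)"
    have "\<forall>\<kappa>\<in>{1..nu}. ?k \<kappa> \<le> nb \<kappa> - nb (\<kappa> - 1)"
      using card_mono[of "block _" "block _ - T"] by (simp add: block_def)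
    then have "0 \<le> structure_tensor nu m nb ?k h r a d" using W[THEN spec, of ?k] by blast
    then have "deficiency r T \<le> (\<Sum>\<kappa>=1..nu. sum h (tail \<kappa> (?k \<kappa>)))"
      unfolding structure_tensor_eq deficiency_eq_block_deficiency by linarith
    also have "\<dots> \<le> (\<Sum>\<kappa>=1..nu. sum h (block \<kappa> \<inter> T))"
      by (intro sum_mono sum_tail_le_sum_block_Int antitone) auto
    also have "\<dots> = sum h T" by (rule sum_blocks[OF T, symmetric])
    finally show "deficiency r T \<le> sum h T" .
  qed
qed

end

theorem theorem1:
  fixes n nu m :: nat and nb h r a d :: "nat \<Rightarrow> nat"
  assumes "1 \<le> nu" and "nu \<le> n"
    and "nb 0 = 0" and "nb nu = n"
    and "\<And>\<kappa>. \<kappa> < nu \<Longrightarrow> nb \<kappa> < nb (\<kappa> + 1)"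
    and "1 \<le> m"
    and "\<And>i. i \<in> {1..m} \<Longrightarrow> a i < d i \<and> d i \<le> nu"
    and "\<And>i. i \<in> {1..m} \<Longrightarrow> 0 < r i \<and> r i \<le> nb (d i) - nb (a i)"
    and "\<And>\<kappa> i j. \<kappa> \<in> {1..nu} \<Longrightarrow> nb (\<kappa> - 1) + 1 \<le> i \<Longrightarrow> i < j \<Longrightarrow> j \<le> nb \<kappa>
           \<Longrightarrow> h i \<ge> h j"
  shows "adequate n m nb h r a d \<longleftrightarrow>
    (\<forall>k :: nat \<Rightarrow> nat. (\<forall>\<kappa>\<in>{1..nu}. k \<kappa> \<le> nb \<kappa> - nb (\<kappa> - 1))
        \<longrightarrow> structure_tensor nu m nb k h r a d \<ge> 0)"
proof -
  interpret slotted_windows n nu m nb a d h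
    using assms(3-5) assms(7)[THEN conjunct1, THEN less_imp_le] assms(7)[THEN conjunct2]
    by unfold_locales auto
  show ?thesis
    using adequate_iff_feasible feasible_iff_deficiency_condition
      deficiency_condition_iff_structure_tensor_nonneg[OF assms(9)]
    by simp
qed

end
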